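(* Let $\Phi:(\mathcal{S},g)\to(\mathcal{M},\bar g)$ be an isometric immersion of an $n$-dimensional orientable Riemannian manifold into a semi-Riemannian manifold with co-dimension $k$, and assume that $\dim\mathrm{Im}\,\widetilde h_p$ is constant on $\mathcal{S}$, so that the umbilical space $\mathscr{U}$ of $\mathcal{S}$ is well defined. Let $0\le m\le k$. Then $\dim\mathscr{U}=m$ if and only if the total shear tensor satisfies $\bigwedge^{k-m+1}\widetilde h^\flat=0$ and $\bigwedge^{k-m}\widetilde h^\flat\neq0$.
   Context: $g=\Phi^\star\bar g$ is positive definite. $h$ is the second fundamental form, $A_\xi$ the shape operator of a normal $\xi$ ($g(A_\xi X,Y)=\bar g(h(X,Y),\xi)$), $H=\frac1n\mathrm{tr}_gh$, and $\widetilde h(X,Y)=h(X,Y)-g(X,Y)H$ is the total shear tensor. The shear space at $p$ is $\mathrm{Im}\,\widetilde h_p=\mathrm{span}\{\widetilde h(v,w):v,w\in T_p\mathcal{S}\}$; the umbilical space at $p$ is $\mathscr{U}_p=\{\xi_p\in T_p\mathcal{S}^\perp:A_{\xi_p}\text{ proportional to the identity}\}$. Under constant dimension, the umbilical space of $\mathcal{S}$ is $\mathscr{U}=\{\xi\text{ normal vector field}:A_\xi\text{ proportional to identity}\}$, a module over functions on $\mathcal{S}$ of dimension $\dim\mathscr{U}_p$. For a vector $V$, $V^\flat=\bar g(V,\cdot)$; $\bigwedge^q\widetilde h^\flat$ denotes the map $(X_1,Y_1,\dots,X_q,Y_q)\mapsto\widetilde h(X_1,Y_1)^\flat\wedge\cdots\wedge\widetilde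 h(X_q,Y_q)^\flat$ for tangent vector fields $X_i,Y_i$. *)

theory Defs
  imports "HOL-Analysis.Analysis" "HOL-Combinatorics.Permutations"
begin

(* Pointwise model of an isometric immersion at a point p:
   T_pS = real^'n (coordinates), dPhi : T_pS -> T_{Phi p}M = real^'m the differential,
   gbar the (semi-Riemannian) metric of M at Phi p, h the second fundamental form
   (normal-valued symmetric bilinear map on T_pS). *)

definition induced_metric ::
  "(real^'n \<Rightarrow> real^'m) \<Rightarrow> (real^'m \<Rightarrow> real^'m \<Rightarrow> real) \<Rightarrow> real^'n \<Rightarrow> real^'n \<Rightarrow> real"
  where "induced_metric dPhi gbar X Y = gbar (dPhi X) (dPhi Y)"

definition normal_space ::
  "(real^'n \<Rightarrow> real^'m) \<Rightarrow> (real^'m \<Rightarrow> real^'m \<Rightarrow> real) \<Rightarrow> (real^'m) set"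
  where "normal_space dPhi gbar = {\<xi>. \<forall>X. gbar (dPhi X) \<xi> = 0}"

definition gram :: "(real^'n \<Rightarrow> real^'n \<Rightarrow> real) \<Rightarrow> real^'n^'n"
  where "gram g = (\<chi> i j. g (axis i 1) (axis j 1))"

definition trace_g ::
  "(real^'n \<Rightarrow> real^'n \<Rightarrow> real) \<Rightarrow> (real^'n \<Rightarrow> real^'n \<Rightarrow> real^'m) \<Rightarrow> real^'m"
  where "trace_g g h = (\<Sum>i\<in>UNIV. \<Sum>j\<in>UNIV. (matrix_inv (gram g) $ i $ j) *\<^sub>R h (axis i 1) (axis j 1))"

definition mean_curv ::
  "(real^'n \<Rightarrow> real^'n \<Rightarrow> real) \<Rightarrow> (real^'n \<Rightarrow> real^'n \<Rightarrow> real^'m) \<Rightarrow> real^'m"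
  where "mean_curv g h = (1 / real CARD('n)) *\<^sub>R trace_g g h"

definition shear ::
  "(real^'n \<Rightarrow> real^'n \<Rightarrow> real) \<Rightarrow> (real^'n \<Rightarrow> real^'n \<Rightarrow> real^'m) \<Rightarrow> real^'n \<Rightarrow> real^'n \<Rightarrow> real^'m"
  where "shear g h X Y = h X Y - g X Y *\<^sub>R mean_curv g h"

definition shear_space ::
  "(real^'n \<Rightarrow> real^'n \<Rightarrow> real) \<Rightarrow> (real^'n \<Rightarrow> real^'n \<Rightarrow> real^'m) \<Rightarrow> (real^'m) set"
  where "shear_space g h = span {shear g h v w | v w. True}"

definition shape_op ::
  "(real^'n \<Rightarrow> real^'n \<Rightarrow> real) \<Rightarrow> (real^'m \<Rightarrow> real^'m \<Rightarrow> real) \<Rightarrow> (real^'n \<Rightarrow> real^'n \<Rightarrow> real^'m)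
     \<Rightarrow> real^'m \<Rightarrow> real^'n \<Rightarrow> real^'n"
  where "shape_op g gbar h \<xi> X = (THE Z. \<forall>Y. g Z Y = gbar (h X Y) \<xi>)"

definition umbilical_space ::
  "(real^'n \<Rightarrow> real^'m) \<Rightarrow> (real^'m \<Rightarrow> real^'m \<Rightarrow> real) \<Rightarrow> (real^'n \<Rightarrow> real^'n \<Rightarrow> real^'m) \<Rightarrow> (real^'m) set"
  where "umbilical_space dPhi gbar h =
     {\<xi> \<in> normal_space dPhi gbar.
        \<exists>c::real. \<forall>X. shape_op (induced_metric dPhi gbar) gbar h \<xi> X = c *\<^sub>R X}"

definition flat :: "(real^'m \<Rightarrow> real^'m \<Rightarrow> real) \<Rightarrow> real^'m \<Rightarrow> real^'m \<Rightarrow> real"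
  where "flat gbar V = gbar V"

(* wedge product of q covectors w_0,...,w_{q-1}, as alternating q-form:
   (w_0 /\ ... /\ w_{q-1})(v_0,...,v_{q-1}) = det [w_i(v_j)]; empty wedge = 1 *)
definition wedge :: "nat \<Rightarrow> (nat \<Rightarrow> 'v \<Rightarrow> real) \<Rightarrow> (nat \<Rightarrow> 'v) \<Rightarrow> real"
  where "wedge q w vs = (\<Sum>\<sigma> | \<sigma> permutes {..<q}. of_int (sign \<sigma>) * (\<Prod>i<q. w i (vs (\<sigma> i))))"

definition wedge_shear_zero ::
  "nat \<Rightarrow> (real^'n \<Rightarrow> real^'m) \<Rightarrow> (real^'m \<Rightarrow> real^'m \<Rightarrow> real) \<Rightarrow> (real^'n \<Rightarrow> real^'n \<Rightarrow> real^'m) \<Rightarrow> bool"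
  where "wedge_shear_zero q dPhi gbar h \<longleftrightarrow>
     (\<forall>Xs Ys :: nat \<Rightarrow> real^'n. \<forall>vs :: nat \<Rightarrow> real^'m.
        wedge q (\<lambda>i. flat gbar (shear (induced_metric dPhi gbar) h (Xs i) (Ys i))) vs = 0)"

end

theory Submission
  imports Defs "Jordan_Normal_Form.Determinant"
begin

text \<open>Everything happens at a single point. A normal \<xi> is umbilical with A_\<xi> = c id iff
gbar(h(X,Y), \<xi>) = c g(X,Y) for all X, Y; tracing with g forces c = gbar(H, \<xi>), so the umbilical
normals are exactly the normals annihilating the shear space. The shear space consists of normal
vectors, hence meets the tangent space trivially, and nondegeneracy of gbar gives
dim U_p = k - dim Im h~_p. On the other hand, evaluated at v_1, ..., v_q the wedge of the covectors
h~(X_i,Y_i)^flat is det gbar(h~(X_i,Y_i), v_j); choosing v_j dual to h~(X_j,Y_j) turns it into a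
Gram determinant, so the wedge vanishes for all arguments iff the h~(X_i,Y_i) are linearly
dependent. Thus the q-th wedge power of h~^flat vanishes iff dim Im h~_p < q, and with
dim Im h~_p = d constant both sides of the equivalence say d = k - m.\<close>

lemma wedge_eq_0_iff_columns_dependent:
  "wedge q w vs = 0 \<longleftrightarrow> (\<exists>c. (\<exists>j<q. c j \<noteq> 0) \<and> (\<forall>i<q. (\<Sum>j<q. w i (vs j) * c j) = 0))"
proof -
  define A where "A = Matrix.mat q q (\<lambda>(i, j). w i (vs j))"
  have A: "A \<in> carrier_mat q q"
    unfolding A_def by simp
  have "wedge q w vs = Determinant.det A"
    unfolding Determinant.det_def A_def wedge_def by (simp add: atLeast0LessThan)
  also have "\<dots> = 0 \<longleftrightarrow> (\<exists>v. v \<in> carrier_vec q \<and> v \<noteq> 0\<^sub>v q \<and> A *\<^sub>v v = 0\<^sub>v q)"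
    by (rule det_0_iff_vec_prod_zero[OF A])
  also have "\<dots> \<longleftrightarrow> (\<exists>c. Matrix.vec q c \<noteq> 0\<^sub>v q \<and> A *\<^sub>v Matrix.vec q c = 0\<^sub>v q)"
    by (metis vec_carrier carrier_vecD eq_vecI index_vec)
  also have "\<dots> \<longleftrightarrow> (\<exists>c. (\<exists>j<q. c j \<noteq> 0) \<and> (\<forall>i<q. (\<Sum>j<q. w i (vs j) * c j) = 0))"
    using A unfolding A_def
    by (simp add: vec_eq_iff scalar_prod_def atLeast0LessThan mult.commute)
  finally show ?thesis .
qed

lemma wedge_transpose: "wedge q w vs = wedge q (\<lambda>i j. w j (vs i)) id"
proof -
  define A where "A = Matrix.mat q q (\<lambda>(i, j). w i (vs j))"
  have "wedge q w vs = Determinant.det A"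
    unfolding Determinant.det_def A_def wedge_def by (simp add: atLeast0LessThan)
  also have "\<dots> = Determinant.det (transpose_mat A)"
    by (simp add: A_def det_transpose[of _ q])
  also have "\<dots> = wedge q (\<lambda>i j. w j (vs i)) id"
    unfolding Determinant.det_def A_def wedge_def by (simp add: atLeast0LessThan)
  finally show ?thesis .
qed

lemma wedge_eq_0_iff_rows_dependent:
  "wedge q w vs = 0 \<longleftrightarrow> (\<exists>c. (\<exists>i<q. c i \<noteq> 0) \<and> (\<forall>j<q. (\<Sum>i<q. c i * w i (vs j)) = 0))"
  unfolding wedge_transpose[of q w] wedge_eq_0_iff_columns_dependent by (simp add: mult.commute)

no_notation vec_index (infixl "$" 100)
no_notation scalar_prod (infix "\<bullet>" 70)

definition dependent_family :: "nat \<Rightarrow> (nat \<Rightarrow> 'a::real_vector) \<Rightarrow> bool" where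
  "dependent_family q u \<longleftrightarrow> (\<exists>c. (\<exists>i<q. c i \<noteq> 0) \<and> (\<Sum>i<q. c i *\<^sub>R u i) = 0)"

lemma dependent_family_iff:
  "dependent_family q u \<longleftrightarrow> \<not> inj_on u {..<q} \<or> dependent (u ` {..<q})"
proof (cases "inj_on u {..<q}")
  case False
  then obtain i j where ij: "i < q" "j < q" "i \<noteq> j" "u i = u j"
    unfolding inj_on_def by blast
  define c :: "nat \<Rightarrow> real" where "c l = (if l = i then 1 else 0) - (if l = j then 1 else 0)" for l
  have "c l *\<^sub>R u l = (if l = i then u l else 0) - (if l = j then u l else 0)" for l
    by (simp add: c_def scaleR_left_diff_distrib)
  then have "(\<Sum>l<q. c l *\<^sub>R u l) = (\<Sum>l<q. if l = i then u l else 0) - (\<Sum>l<q. if l = j then u l else 0)"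
    by (simp add: sum_subtractf)
  then have "(\<Sum>l<q. c l *\<^sub>R u l) = 0"
    using ij by simp
  moreover have "c i \<noteq> 0"
    using ij by (simp add: c_def)
  ultimately show ?thesis
    using False ij(1) unfolding dependent_family_def by blast
next
  case True
  have "(\<exists>c. (\<exists>i<q. c i \<noteq> 0) \<and> (\<Sum>i<q. c i *\<^sub>R u i) = 0) \<longleftrightarrow>
        (\<exists>d. (\<exists>v\<in>u ` {..<q}. d v \<noteq> 0) \<and> (\<Sum>v\<in>u ` {..<q}. d v *\<^sub>R v) = 0)"
  proof
    assume "\<exists>c. (\<exists>i<q. c i \<noteq> 0) \<and> (\<Sum>i<q. c i *\<^sub>R u i) = 0"
    then obtain c where "\<exists>i<q. c i \<noteq> 0" "(\<Sum>i<q. c i *\<^sub>R u i) = 0"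
      by blast
    moreover have "c i = c (the_inv_into {..<q} u (u i))" if "i < q" for i
      using True that by (simp add: the_inv_into_f_f)
    ultimately show "\<exists>d. (\<exists>v\<in>u ` {..<q}. d v \<noteq> 0) \<and> (\<Sum>v\<in>u ` {..<q}. d v *\<^sub>R v) = 0"
      using True by (intro exI[of _ "\<lambda>v. c (the_inv_into {..<q} u v)"]) (auto simp: sum.reindex)
  next
    assume "\<exists>d. (\<exists>v\<in>u ` {..<q}. d v \<noteq> 0) \<and> (\<Sum>v\<in>u ` {..<q}. d v *\<^sub>R v) = 0"
    then obtain d where "\<exists>v\<in>u ` {..<q}. d v \<noteq> 0" "(\<Sum>v\<in>u ` {..<q}. d v *\<^sub>R v) = 0"
      by blast
    then show "\<exists>c. (\<exists>i<q. c i \<noteq> 0) \<and> (\<Sum>i<q. c i *\<^sub>R u i) = 0"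
      using True by (intro exI[of _ "\<lambda>i. d (u i)"]) (auto simp: sum.reindex)
  qed
  then show ?thesis
    using True by (simp add: dependent_family_def dependent_finite)
qed

lemma dependent_family_cong:
  assumes "\<And>i. i < q \<Longrightarrow> u i = v i"
  shows "dependent_family q u \<longleftrightarrow> dependent_family q v"
proof -
  have "(\<Sum>i<q. c i *\<^sub>R u i) = (\<Sum>i<q. c i *\<^sub>R v i)" for c
    using assms by (intro sum.cong) auto
  then show ?thesis
    by (simp add: dependent_family_def)
qed

lemma dependent_families_iff_dim_less:
  fixes T :: "'a::euclidean_space set"
  shows "(\<forall>u. u ` {..<q} \<subseteq> T \<longrightarrow> dependent_family q u) \<longleftrightarrow> dim T < q"
proof
  assume dependent: "\<forall>u. u ` {..<q} \<subseteq> T \<longrightarrow> dependent_family q u"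
  show "dim T < q"
  proof (rule ccontr)
    assume "\<not> dim T < q"
    obtain B where B: "B \<subseteq> T" "independent B" "card B = dim T"
      by (rule basis_exists)
    with \<open>\<not> dim T < q\<close> obtain B' where "B' \<subseteq> B" "card B' = q" "finite B'"
      by (metis obtain_subset_with_card_n not_less)
    with B have B': "B' \<subseteq> T" "independent B'" "card B' = q" "finite B'"
      using independent_mono[of B B'] by auto
    then obtain u where "bij_betw u {..<q} B'"
      using ex_bij_betw_nat_finite[of B'] by (auto simp: atLeast0LessThan)
    then have "u ` {..<q} \<subseteq> T" "\<not> dependent_family q u"
      using B' by (auto simp: bij_betw_def dependent_family_iff)
    with dependent show False
      by blast
  qed
next
  assume "dim T < q"
  show "\<forall>u. u ` {..<q} \<subseteq> T \<longrightarrow> dependent_family q u"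
  proof (intro allI impI)
    fix u :: "nat \<Rightarrow> 'a"
    assume "u ` {..<q} \<subseteq> T"
    then have "\<not> independent (u ` {..<q})" if "inj_on u {..<q}"
      using independent_card_le_dim[of "u ` {..<q}" T] card_image[OF that] \<open>dim T < q\<close> by auto
    then show "dependent_family q u"
      unfolding dependent_family_iff by blast
  qed
qed

definition dual_vec :: "('a::euclidean_space \<Rightarrow> real) \<Rightarrow> 'a" where
  "dual_vec f = (\<Sum>b\<in>Basis. f b *\<^sub>R b)"

lemma inner_dual_vec:
  assumes "linear f"
  shows "dual_vec f \<bullet> v = f v"
proof -
  have "dual_vec f \<bullet> v = (\<Sum>b\<in>Basis. f b * (b \<bullet> v))"
    by (simp add: dual_vec_def inner_sum_left)
  also have "\<dots> = (\<Sum>b\<in>Basis. (v \<bullet> b) * f b)"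
    by (intro sum.cong refl) (metis inner_commute mult.commute)
  also have "\<dots> = f (\<Sum>b\<in>Basis. (v \<bullet> b) *\<^sub>R b)"
    using assms by (simp add: linear_sum linear_scale)
  finally show ?thesis
    by (simp add: euclidean_representation)
qed

lemma linear_dual_vec_bilinear:
  assumes "bilinear b"
  shows "linear (\<lambda>u. dual_vec (b u))"
  by (rule linearI)
    (simp_all add: dual_vec_def bilinear_ladd[OF assms] bilinear_lmul[OF assms]
      scaleR_add_left sum.distrib scaleR_sum_right)

lemma inj_dual_vec_bilinear:
  assumes "bilinear b" and nondeg: "\<And>u. (\<forall>v. b u v = 0) \<Longrightarrow> u = 0"
  shows "inj (\<lambda>u. dual_vec (b u))"
proof -
  have "u = 0" if "dual_vec (b u) = 0" for u
    using nondeg inner_dual_vec[of "b u"] that assms(1) unfolding bilinear_def by force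
  then show ?thesis
    using linear_dual_vec_bilinear[OF assms(1)] by (simp add: linear_inj_iff_eq_0)
qed

lemma wedge_bilinear_eq_0_iff:
  fixes b :: "'a::euclidean_space \<Rightarrow> 'a \<Rightarrow> real" and u :: "nat \<Rightarrow> 'a"
  assumes b: "bilinear b" and nondeg: "\<And>u. (\<forall>v. b u v = 0) \<Longrightarrow> u = 0"
  shows "(\<forall>vs. wedge q (\<lambda>i. b (u i)) vs = 0) \<longleftrightarrow> dependent_family q u"
proof
  assume "dependent_family q u"
  then obtain c where c: "\<exists>i<q. c i \<noteq> 0" "(\<Sum>i<q. c i *\<^sub>R u i) = 0"
    unfolding dependent_family_def by blast
  have "(\<Sum>i<q. c i * b (u i) v) = 0" for v
  proof -
    have lin: "linear (\<lambda>x. b x v)"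
      using b by (simp add: bilinear_def)
    have "(\<Sum>i<q. c i * b (u i) v) = b (\<Sum>i<q. c i *\<^sub>R u i) v"
      by (simp add: linear_sum[OF lin] linear_scale[OF lin])
    then show ?thesis
      using c(2) bilinear_lzero[OF b] by simp
  qed
  with c(1) show "\<forall>vs. wedge q (\<lambda>i. b (u i)) vs = 0"
    by (auto simp: wedge_eq_0_iff_rows_dependent)
next
  assume zero: "\<forall>vs. wedge q (\<lambda>i. b (u i)) vs = 0"
  define vs where "vs j = dual_vec (b (u j))" for j
  have inner_vs: "vs i \<bullet> vs j = b (u i) (vs j)" for i j
    using b inner_dual_vec[of "b (u i)"] by (simp add: vs_def bilinear_def)
  obtain c where c: "\<exists>j<q. c j \<noteq> 0" "\<forall>i<q. (\<Sum>j<q. b (u i) (vs j) * c j) = 0"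
    using zero[rule_format, of vs] by (auto simp: wedge_eq_0_iff_columns_dependent)
  define w where "w = (\<Sum>j<q. c j *\<^sub>R u j)"
  have lin: "linear (\<lambda>u. dual_vec (b u))"
    by (rule linear_dual_vec_bilinear[OF b])
  have dual_w: "dual_vec (b w) = (\<Sum>j<q. c j *\<^sub>R vs j)"
    by (simp add: w_def vs_def linear_sum[OF lin] linear_scale[OF lin])
  have "dual_vec (b w) \<bullet> dual_vec (b w) = (\<Sum>i<q. c i * (vs i \<bullet> dual_vec (b w)))"
    by (subst (1) dual_w) (simp add: inner_sum_left)
  also have "\<dots> = (\<Sum>i<q. c i * (\<Sum>j<q. b (u i) (vs j) * c j))"
    by (simp add: dual_w inner_sum_right inner_vs mult.commute)
  also have "\<dots> = 0"
    using c(2) by simp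
  finally have "dual_vec (b w) = dual_vec (b 0)"
    using lin linear_0 by fastforce
  then have "w = 0"
    using inj_dual_vec_bilinear[OF b nondeg] by (auto dest: injD)
  with c(1) show "dependent_family q u"
    unfolding dependent_family_def w_def by blast
qed

lemma dim_annihilator:
  fixes b :: "'a::euclidean_space \<Rightarrow> 'a \<Rightarrow> real" and W :: "'a set"
  assumes b: "bilinear b" and nondeg: "\<And>u. (\<forall>v. b u v = 0) \<Longrightarrow> u = 0"
  shows "dim {\<xi>. \<forall>w\<in>W. b w \<xi> = 0} + dim W = DIM('a)"
proof -
  define \<phi> where "\<phi> u = dual_vec (b u)" for u
  have lin: "linear \<phi>"
    unfolding \<phi>_def by (rule linear_dual_vec_bilinear[OF b])
  have "b w \<xi> = 0 \<longleftrightarrow> Linear_Algebra.orthogonal (\<phi> w) \<xi>" for w \<xi>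
    using b inner_dual_vec[of "b w"] by (simp add: \<phi>_def bilinear_def Linear_Algebra.orthogonal_def)
  moreover have "(\<forall>x\<in>\<phi> ` W. Linear_Algebra.orthogonal x \<xi>) \<longleftrightarrow>
      (\<forall>x\<in>span (\<phi> ` W). Linear_Algebra.orthogonal x \<xi>)" for \<xi>
    by (meson orthogonal_commute orthogonal_to_span span_base)
  ultimately have "{\<xi>. \<forall>w\<in>W. b w \<xi> = 0} = {\<xi>. \<forall>x\<in>span (\<phi> ` W). Linear_Algebra.orthogonal x \<xi>}"
    by auto
  moreover have "dim {\<xi> \<in> UNIV. \<forall>x\<in>span (\<phi> ` W). Linear_Algebra.orthogonal x \<xi>} + dim (span (\<phi> ` W)) = dim (UNIV :: 'a set)"
    by (rule dim_subspace_orthogonal_to_vectors) auto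
  moreover have "dim (\<phi> ` W) = dim W"
    using dim_image_eq[OF lin] inj_dual_vec_bilinear[OF b nondeg]
    unfolding \<phi>_def by (metis inj_on_subset subset_UNIV)
  ultimately show ?thesis
    by simp
qed

lemma dim_Un_eq_add_if_span_Int_trivial:
  fixes A B :: "'a::euclidean_space set"
  assumes "span A \<inter> span B \<subseteq> {0}"
  shows "dim (A \<union> B) = dim A + dim B"
proof -
  have "span (A \<union> B) = {x + y |x y. x \<in> span A \<and> y \<in> span B}"
    by (auto simp: span_Un)
  then have "dim (A \<union> B) = dim {x + y |x y. x \<in> span A \<and> y \<in> span B}"
    by (metis dim_span)
  moreover have "span A \<inter> span B = span {}"
    using assms span_zero by auto
  ultimately show ?thesis
    using dim_sums_Int[OF subspace_span subspace_span, of A B] by simp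
qed

lemma bilinear_sum_left: "bilinear h \<Longrightarrow> h (\<Sum>i\<in>S. f i) y = (\<Sum>i\<in>S. h (f i) y)"
  unfolding bilinear_def using linear_sum[of "\<lambda>x. h x y"] by blast

lemma bilinear_sum_right: "bilinear h \<Longrightarrow> h y (\<Sum>i\<in>S. f i) = (\<Sum>i\<in>S. h y (f i))"
  unfolding bilinear_def using linear_sum[of "h y"] by blast

lemma gram_mult_vec:
  assumes "bilinear g"
  shows "(gram g *v x) $ i = g (axis i 1) x"
proof -
  have "g (axis i 1) x = g (axis i 1) (\<Sum>j\<in>UNIV. x $ j *\<^sub>R axis j 1)"
    using basis_expansion[of x] by (simp add: scalar_mult_eq_scaleR)
  also have "\<dots> = (\<Sum>j\<in>UNIV. g (axis i 1) (axis j 1) * x $ j)"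
    using assms by (simp add: bilinear_sum_right bilinear_rmul mult.commute)
  finally show ?thesis
    by (simp add: matrix_vector_mult_def gram_def)
qed

lemma invertible_gram:
  assumes g: "bilinear g" and posdef: "\<And>X. X \<noteq> 0 \<Longrightarrow> g X X > 0"
  shows "invertible (gram g)"
proof -
  have "x \<bullet> (gram g *v x) = g x x" for x
  proof -
    have "x \<bullet> (gram g *v x) = (\<Sum>i\<in>UNIV. x $ i * g (axis i 1) x)"
      by (simp add: inner_vec_def gram_mult_vec[OF g])
    also have "\<dots> = g (\<Sum>i\<in>UNIV. x $ i *\<^sub>R axis i 1) x"
      by (simp add: bilinear_sum_left[OF g] bilinear_lmul[OF g])
    finally show ?thesis
      using basis_expansion[of x] by (simp add: scalar_mult_eq_scaleR)
  qed
  then have "gram g *v x = 0 \<Longrightarrow> x = 0" for x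
    by (metis inner_zero_right less_irrefl posdef)
  then show ?thesis
    unfolding invertible_left_inverse matrix_left_invertible_ker by blast
qed

lemma gram_inverse_contraction:
  fixes g :: "real^'n \<Rightarrow> real^'n \<Rightarrow> real"
  assumes g: "bilinear g" and symmetric: "\<And>X Y. g X Y = g Y X"
    and posdef: "\<And>X. X \<noteq> 0 \<Longrightarrow> g X X > 0"
  shows "(\<Sum>i\<in>UNIV. \<Sum>j\<in>UNIV. matrix_inv (gram g) $ i $ j * g (axis i 1) (axis j 1)) = real CARD('n)"
proof -
  have "matrix_inv (gram g) ** gram g = Finite_Cartesian_Product.mat 1"
    using invertible_gram[OF g posdef]
    unfolding invertible_def matrix_inv_def by (metis (mono_tags, lifting) someI_ex)
  then have "(matrix_inv (gram g) ** gram g) $ i $ i = 1" for i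
    by (simp add: Finite_Cartesian_Product.mat_def)
  then have "(\<Sum>j\<in>UNIV. matrix_inv (gram g) $ i $ j * g (axis j 1) (axis i 1)) = 1" for i
    by (simp add: matrix_matrix_mult_def gram_def)
  moreover have "(\<Sum>j\<in>UNIV. matrix_inv (gram g) $ i $ j * g (axis i 1) (axis j 1)) =
      (\<Sum>j\<in>UNIV. matrix_inv (gram g) $ i $ j * g (axis j 1) (axis i 1))" for i
    using symmetric by presburger
  ultimately show ?thesis
    by simp
qed

lemma ex_representing_vector:
  fixes g :: "'a::euclidean_space \<Rightarrow> 'a \<Rightarrow> real"
  assumes g: "bilinear g" and nondeg: "\<And>u. (\<forall>v. g u v = 0) \<Longrightarrow> u = 0" and f: "linear f"
  obtains Z where "\<And>Y. g Z Y = f Y"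
proof -
  have "surj (\<lambda>Z. dual_vec (g Z))"
    using linear_injective_imp_surjective[OF linear_dual_vec_bilinear[OF g] inj_dual_vec_bilinear[OF g nondeg]]
    by simp
  then obtain Z where "dual_vec (g Z) = dual_vec f"
    by (metis surjD)
  then have "g Z Y = f Y" for Y
    using g inner_dual_vec[OF f, of Y] inner_dual_vec[of "g Z" Y] by (simp add: bilinear_def)
  then show ?thesis
    using that by blast
qed

lemma shape_op_eqI:
  assumes g: "bilinear g" and posdef: "\<And>X. X \<noteq> 0 \<Longrightarrow> g X X > 0"
    and Z: "\<And>Y. g Z Y = b (H X Y) \<xi>"
  shows "shape_op g b H \<xi> X = Z"
  unfolding shape_op_def
proof (rule the_equality)
  show "\<forall>Y. g Z Y = b (H X Y) \<xi>"
    using Z by blast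
next
  fix Z' assume "\<forall>Y. g Z' Y = b (H X Y) \<xi>"
  then have "g (Z' - Z) (Z' - Z) = 0"
    using Z by (simp add: bilinear_lsub[OF g])
  then show "Z' = Z"
    by (metis less_irrefl posdef right_minus_eq)
qed

lemma bilinear_induced_metric:
  assumes L: "linear L" and b: "bilinear b"
  shows "bilinear (induced_metric L b)"
proof -
  have "linear (\<lambda>Y. b (L X) (L Y))" "linear (\<lambda>Y. b (L Y) (L X))" for X
    using b linear_compose[OF L, of "b (L X)"] linear_compose[OF L, of "\<lambda>v. b v (L X)"]
    by (simp_all add: bilinear_def o_def)
  then show ?thesis
    by (simp add: bilinear_def induced_metric_def)
qed

lemma umbilical_space_iff:
  fixes L :: "real^'n \<Rightarrow> real^'m"
  assumes L: "linear L" and b: "bilinear b" and H: "bilinear H"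
    and posdef: "\<And>X. X \<noteq> 0 \<Longrightarrow> induced_metric L b X X > 0"
  shows "\<xi> \<in> umbilical_space L b H \<longleftrightarrow>
    \<xi> \<in> normal_space L b \<and> (\<exists>c. \<forall>X Y. b (H X Y) \<xi> = c * induced_metric L b X Y)"
proof -
  let ?g = "induced_metric L b"
  have g: "bilinear ?g"
    by (rule bilinear_induced_metric[OF L b])
  have nondeg: "u = 0" if "\<forall>v. ?g u v = 0" for u
    using that posdef by (metis less_irrefl)
  have "shape_op ?g b H \<xi> X = c *\<^sub>R X \<longleftrightarrow> (\<forall>Y. b (H X Y) \<xi> = c * ?g X Y)" for c X
  proof
    have "linear (\<lambda>Y. b (H X Y) \<xi>)"
      using b H linear_compose[of "H X" "\<lambda>v. b v \<xi>"] by (simp add: bilinear_def o_def)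
    then obtain Z where Z: "\<And>Y. ?g Z Y = b (H X Y) \<xi>"
      using ex_representing_vector[OF g nondeg] by blast
    moreover assume "shape_op ?g b H \<xi> X = c *\<^sub>R X"
    ultimately have "Z = c *\<^sub>R X"
      using shape_op_eqI[OF g posdef] by metis
    then show "\<forall>Y. b (H X Y) \<xi> = c * ?g X Y"
      using Z by (simp add: bilinear_lmul[OF g])
  next
    assume "\<forall>Y. b (H X Y) \<xi> = c * ?g X Y"
    then show "shape_op ?g b H \<xi> X = c *\<^sub>R X"
      by (simp add: shape_op_eqI[OF g posdef] bilinear_lmul[OF g])
  qed
  then show ?thesis
    unfolding umbilical_space_def by blast
qed

lemma shear_annihilated_iff:
  fixes g :: "real^'n \<Rightarrow> real^'n \<Rightarrow> real" and H :: "real^'n \<Rightarrow> real^'n \<Rightarrow> real^'m"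
  assumes g: "bilinear g" and symmetric: "\<And>X Y. g X Y = g Y X"
    and posdef: "\<And>X. X \<noteq> 0 \<Longrightarrow> g X X > 0" and b: "bilinear b"
  shows "(\<forall>X Y. b (shear g H X Y) \<xi> = 0) \<longleftrightarrow> (\<exists>c. \<forall>X Y. b (H X Y) \<xi> = c * g X Y)"
proof
  assume "\<forall>X Y. b (shear g H X Y) \<xi> = 0"
  then have "b (H X Y) \<xi> = b (mean_curv g H) \<xi> * g X Y" for X Y
    by (simp add: shear_def bilinear_lsub[OF b] bilinear_lmul[OF b])
  then show "\<exists>c. \<forall>X Y. b (H X Y) \<xi> = c * g X Y"
    by blast
next
  assume "\<exists>c. \<forall>X Y. b (H X Y) \<xi> = c * g X Y"
  then obtain c where c: "\<And>X Y. b (H X Y) \<xi> = c * g X Y"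
    by blast
  have "b (mean_curv g H) \<xi> =
      c * (\<Sum>i\<in>UNIV. \<Sum>j\<in>UNIV. matrix_inv (gram g) $ i $ j * g (axis i 1) (axis j 1)) / real CARD('n)"
    by (simp add: mean_curv_def trace_g_def bilinear_sum_left[OF b] bilinear_lmul[OF b] c
        sum_distrib_left sum_divide_distrib mult_ac)
  also have "\<dots> = c"
    by (simp add: gram_inverse_contraction[OF g symmetric posdef])
  finally show "\<forall>X Y. b (shear g H X Y) \<xi> = 0"
    by (simp add: shear_def bilinear_lsub[OF b] bilinear_lmul[OF b] c)
qed

lemma mean_curv_in_subspace:
  assumes "subspace N" and "\<And>X Y. H X Y \<in> N"
  shows "mean_curv g H \<in> N"
  using assms unfolding mean_curv_def trace_g_def
  by (intro subspace_scale subspace_sum) auto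

lemma dim_umbilical_space:
  fixes L :: "real^'n \<Rightarrow> real^'m"
  assumes L: "linear L" "inj L" and b: "bilinear b" and symmetric: "\<And>u v. b u v = b v u"
    and nondeg: "\<And>u. (\<forall>v. b u v = 0) \<Longrightarrow> u = 0"
    and posdef: "\<And>X. X \<noteq> 0 \<Longrightarrow> induced_metric L b X X > 0"
    and H: "bilinear H" and normal: "\<And>X Y. H X Y \<in> normal_space L b"
  shows "dim (umbilical_space L b H) + CARD('n) + dim (shear_space (induced_metric L b) H) = CARD('m)"
proof -
  let ?g = "induced_metric L b"
  define Sh where "Sh = {shear ?g H X Y |X Y. True}"
  have g_symmetric: "?g X Y = ?g Y X" for X Y
    using symmetric by (simp add: induced_metric_def)
  have "\<xi> \<in> umbilical_space L b H \<longleftrightarrow> (\<forall>X. b (L X) \<xi> = 0) \<and> (\<forall>X Y. b (shear ?g H X Y) \<xi> = 0)" for \<xi>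
    by (simp add: umbilical_space_iff[OF L(1) b H posdef] normal_space_def
        shear_annihilated_iff[OF bilinear_induced_metric[OF L(1) b] g_symmetric posdef b])
  then have umbilical: "umbilical_space L b H = {\<xi>. \<forall>w\<in>range L \<union> Sh. b w \<xi> = 0}"
    unfolding Sh_def by blast
  have N: "subspace (normal_space L b)"
    using b by (auto simp: subspace_def normal_space_def bilinear_rzero bilinear_radd bilinear_rmul)
  have "Sh \<subseteq> normal_space L b"
    using N normal mean_curv_in_subspace[OF N normal] unfolding Sh_def shear_def
    by (auto intro!: subspace_diff subspace_scale)
  have "span (range L) \<inter> span Sh \<subseteq> {0}"
  proof
    fix x assume x: "x \<in> span (range L) \<inter> span Sh"
    then obtain X where X: "x = L X"
      using span_linear_image[OF L(1), of UNIV] by auto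
    have "x \<in> normal_space L b"
      using x span_minimal[OF \<open>Sh \<subseteq> normal_space L b\<close> N] by blast
    then have "?g X X = 0"
      by (simp add: X normal_space_def induced_metric_def)
    then have "X = 0"
      by (metis less_irrefl posdef)
    then show "x \<in> {0}"
      using X linear_0[OF L(1)] by simp
  qed
  moreover have "dim (range L) = CARD('n)"
    using dim_image_eq[OF L(1), of UNIV] L(2) by simp
  ultimately have "dim (range L \<union> Sh) = CARD('n) + dim Sh"
    by (simp add: dim_Un_eq_add_if_span_Int_trivial)
  moreover have "dim (umbilical_space L b H) + dim (range L \<union> Sh) = CARD('m)"
    using dim_annihilator[OF b nondeg, of "range L \<union> Sh"] umbilical by simp
  moreover have "dim (shear_space ?g H) = dim Sh"
    by (simp add: shear_space_def Sh_def)
  ultimately show ?thesis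
    by simp
qed

lemma wedge_shear_zero_iff:
  fixes L :: "real^'n \<Rightarrow> real^'m"
  assumes b: "bilinear b" and nondeg: "\<And>u. (\<forall>v. b u v = 0) \<Longrightarrow> u = 0"
  shows "wedge_shear_zero q L b H \<longleftrightarrow> dim (shear_space (induced_metric L b) H) < q"
proof -
  let ?h = "shear (induced_metric L b) H"
  have "wedge_shear_zero q L b H \<longleftrightarrow> (\<forall>Xs Ys. dependent_family q (\<lambda>i. ?h (Xs i) (Ys i)))"
    by (simp add: wedge_shear_zero_def flat_def wedge_bilinear_eq_0_iff[OF b nondeg])
  also have "\<dots> \<longleftrightarrow> (\<forall>u. u ` {..<q} \<subseteq> {?h X Y |X Y. True} \<longrightarrow> dependent_family q u)"
  proof (intro iffI allI impI)
    fix u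
    assume all: "\<forall>Xs Ys. dependent_family q (\<lambda>i. ?h (Xs i) (Ys i))"
      and "u ` {..<q} \<subseteq> {?h X Y |X Y. True}"
    then have "\<forall>i. \<exists>X Y. i < q \<longrightarrow> u i = ?h X Y"
      by blast
    then obtain Xs Ys where "\<And>i. i < q \<Longrightarrow> u i = ?h (Xs i) (Ys i)"
      by metis
    then have "dependent_family q u \<longleftrightarrow> dependent_family q (\<lambda>i. ?h (Xs i) (Ys i))"
      by (rule dependent_family_cong)
    with all show "dependent_family q u"
      by blast
  next
    fix Xs Ys
    assume "\<forall>u. u ` {..<q} \<subseteq> {?h X Y |X Y. True} \<longrightarrow> dependent_family q u"
    moreover have "(\<lambda>i. ?h (Xs i) (Ys i)) ` {..<q} \<subseteq> {?h X Y |X Y. True}"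
      by auto
    ultimately show "dependent_family q (\<lambda>i. ?h (Xs i) (Ys i))"
      by blast
  qed
  also have "\<dots> \<longleftrightarrow> dim {?h X Y |X Y. True} < q"
    by (rule dependent_families_iff_dim_less)
  finally show ?thesis
    by (simp add: shear_space_def)
qed

theorem proposition3p4:
  fixes S :: "'p set"
    and dPhi :: "'p \<Rightarrow> real^'n \<Rightarrow> real^'m"
    and gbar :: "'p \<Rightarrow> real^'m \<Rightarrow> real^'m \<Rightarrow> real"
    and h :: "'p \<Rightarrow> real^'n \<Rightarrow> real^'n \<Rightarrow> real^'m"
    and k m :: nat
  assumes nonempty: "S \<noteq> {}"
    and codim: "CARD('m) = CARD('n) + k"
    and dPhi_lin: "\<And>p. p \<in> S \<Longrightarrow> linear (dPhi p)"
    and dPhi_inj: "\<And>p. p \<in> S \<Longrightarrow> inj (dPhi p)"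
    and gbar_bilin: "\<And>p. p \<in> S \<Longrightarrow> bilinear (gbar p)"
    and gbar_sym: "\<And>p u v. p \<in> S \<Longrightarrow> gbar p u v = gbar p v u"
    and gbar_nondeg: "\<And>p u. p \<in> S \<Longrightarrow> (\<forall>v. gbar p u v = 0) \<Longrightarrow> u = 0"
    and g_posdef: "\<And>p X. p \<in> S \<Longrightarrow> X \<noteq> 0 \<Longrightarrow> induced_metric (dPhi p) (gbar p) X X > 0"
    and h_bilin: "\<And>p. p \<in> S \<Longrightarrow> bilinear (h p)"
    and h_sym: "\<And>p X Y. p \<in> S \<Longrightarrow> h p X Y = h p Y X"
    and h_normal: "\<And>p X Y. p \<in> S \<Longrightarrow> h p X Y \<in> normal_space (dPhi p) (gbar p)"
    and const_dim: "\<exists>d. \<forall>p\<in>S. dim (shear_space (induced_metric (dPhi p) (gbar p)) (h p)) = d"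
    and m_le: "m \<le> k"
  shows "(\<forall>p\<in>S. dim (umbilical_space (dPhi p) (gbar p) (h p)) = m) \<longleftrightarrow>
         ((\<forall>p\<in>S. wedge_shear_zero (k - m + 1) (dPhi p) (gbar p) (h p)) \<and>
          \<not> (\<forall>p\<in>S. wedge_shear_zero (k - m) (dPhi p) (gbar p) (h p)))"
proof -
  define d where "d p = dim (shear_space (induced_metric (dPhi p) (gbar p)) (h p))" for p
  obtain p0 where p0: "p0 \<in> S"
    using nonempty by blast
  obtain d0 where d0: "\<And>p. p \<in> S \<Longrightarrow> d p = d0"
    using const_dim unfolding d_def by blast
  have dims: "dim (umbilical_space (dPhi p) (gbar p) (h p)) + CARD('n) + d0 = CARD('m)" if "p \<in> S" for p
    using dim_umbilical_space[OF dPhi_lin[OF that] dPhi_inj[OF that] gbar_bilin[OF that] gbar_sym[OF that]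
        gbar_nondeg[OF that] g_posdef[OF that] h_bilin[OF that] h_normal[OF that]] d0[OF that]
    unfolding d_def by simp
  have wedge: "wedge_shear_zero q (dPhi p) (gbar p) (h p) \<longleftrightarrow> d0 < q" if "p \<in> S" for p q
    using wedge_shear_zero_iff[OF gbar_bilin[OF that] gbar_nondeg[OF that], of q "dPhi p" "h p"] d0[OF that]
    unfolding d_def by simp
  have umbilical: "dim (umbilical_space (dPhi p) (gbar p) (h p)) = k - d0" if "p \<in> S" for p
    using dims[OF that] codim by simp
  have "d0 \<le> k"
    using dims[OF p0] codim by simp
  have "(\<forall>p\<in>S. dim (umbilical_space (dPhi p) (gbar p) (h p)) = m) \<longleftrightarrow> k - d0 = m"
    using umbilical p0 by auto
  moreover have "(\<forall>p\<in>S. wedge_shear_zero (k - m + 1) (dPhi p) (gbar p) (h p)) \<and>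
      \<not> (\<forall>p\<in>S. wedge_shear_zero (k - m) (dPhi p) (gbar p) (h p)) \<longleftrightarrow>
      d0 < k - m + 1 \<and> \<not> d0 < k - m"
    using wedge p0 by auto
  moreover have "k - d0 = m \<longleftrightarrow> d0 < k - m + 1 \<and> \<not> d0 < k - m"
    using \<open>d0 \<le> k\<close> m_le by arith
  ultimately show ?thesis
    by blast
qed

end
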